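(* Let $M_t$ be the true model and $M_j$ any model in the class. (i) If $\dim(M_j)<\dim(M_t)$ then $\delta^*(M_t,M_j)>0$. (ii) If $\dim(M_j)=\dim(M_t)$ then $\delta^*(M_t,M_j)=0$ if $M_j=M_t$ and $\delta^*(M_t,M_j)>0$ if $M_j\neq M_t$. (iii) If $\dim(M_j)>\dim(M_t)$ then $\delta^*(M_t,M_j)=0$ if $M_t$ is nested in $M_j$ and $\delta^*(M_t,M_j)>0$ otherwise.
   Context: Normal linear regression with $k$ potential regressors and $n$ observations; a model $M_j$ contains the intercept and a subset of $j$ regressors, and $\dim(M_j)=j$; $M_t$ is nested in $M_j$ if the regressors of $M_t$ are among those of $M_j$. The true model $M_t$ has sampling distribution $N_n(\mathbf{y}\mid\mathbf{X}_{t+1}\boldsymbol\beta_{t+1},\sigma_t^2\mathbf{I}_n)$ with slope vector $\boldsymbol\beta_t$, all of whose regression coefficients are nonzero. Let $\Sigma^{(n)}_{t+j}=\begin{pmatrix}S^{(n)}_{tt}&S^{(n)}_{tj}\\S^{(n)}_{jt}&S^{(n)}_{jj}\end{pmatrix}$ be the (sample) covariance matrix of the joint set of covariates of $M_t$ and $M_j$, with $S^{(n)}_{tt},S^{(n)}_{jj}$ positive definite, let $S^{(n)}_{t\cdot j}=S^{(n)}_{tt}-S^{(n)}_{tj}(S^{(n)}_{jj})^{-1}S^{(n)}_{jt}$ and $S_{t\cdot j}=\lim_n S^{(n)}_{t\cdot j}$; the limiting covariance matrix of covariates is assumed to exist, and for distinct covariates to be positive definite. The pseudo-distance is $\delta_n(M_t,M_j)=\frac{1}{2\sigma_t^2}\boldsymbol\beta_t'S^{(n)}_{t\cdot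 j}\boldsymbol\beta_t$ (equivalently $\frac{1}{2\sigma_t^2}\boldsymbol\beta_t'\frac{\mathbf{X}_t'(\mathbf{I}-\mathbf{H}_j)\mathbf{X}_t}{n}\boldsymbol\beta_t$, $\mathbf{H}_j$ the hat matrix of $M_j$), and $\delta^*(M_t,M_j)=\lim_{n\to\infty}\delta_n(M_t,M_j)$. *)

theory Defs
  imports "Jordan_Normal_Form.DL_Submatrix" "Jordan_Normal_Form.Gauss_Jordan_Elimination"
begin

(* Regressors are indexed 0..<k; a model is the set of indices of its regressors
   (the intercept is implicit).  Covariance matrices of all k covariates are k x k
   matrices; the blocks for a model are extracted with submatrix (increasing index order). *)

definition pos_def_mat :: "real mat \<Rightarrow> nat \<Rightarrow> bool" where
  "pos_def_mat A n \<longleftrightarrow> A \<in> carrier_mat n n \<and> transpose_mat A = A \<and>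
     (\<forall>v \<in> carrier_vec n. v \<noteq> 0\<^sub>v n \<longrightarrow> v \<bullet> (A *\<^sub>v v) > 0)"

definition schur_cov :: "real mat \<Rightarrow> nat set \<Rightarrow> nat set \<Rightarrow> real mat" where
  "schur_cov S T J = submatrix S T T -
      submatrix S T J * the (mat_inverse (submatrix S J J)) * submatrix S J T"

definition pseudo_dist :: "real \<Rightarrow> real vec \<Rightarrow> real mat \<Rightarrow> nat set \<Rightarrow> nat set \<Rightarrow> real" where
  "pseudo_dist sigma2 beta S T J = (1 / (2 * sigma2)) * (beta \<bullet> (schur_cov S T J *\<^sub>v beta))"

end

theory Submission
  imports Defs "Jordan_Normal_Form.Determinant"
begin

text \<open>Let \<open>E\<^sub>I\<close> be the \<open>k \<times> |I|\<close> matrix selecting the coordinates in \<open>I\<close>, so that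
  \<open>S\<^sub>I\<^sub>J = E\<^sub>I' S E\<^sub>J\<close>. With \<open>y = S\<^sub>j\<^sub>j\<^sup>-\<^sup>1 S\<^sub>j\<^sub>t \<beta>\<close> the quadratic form \<open>\<beta>' S\<^sub>t\<^sub>\<cdot>\<^sub>j \<beta>\<close> equals
  \<open>w' S w\<close> for \<open>w = E\<^sub>t \<beta> - E\<^sub>j y\<close>. If \<open>T \<subseteq> J\<close> then \<open>E\<^sub>t = E\<^sub>j P\<close> for some \<open>P\<close>, and the
  Schur complement vanishes for every \<open>n\<close>. Otherwise a regressor of \<open>T\<close> outside \<open>J\<close> gives \<open>w\<close> the
  nonzero coordinate of \<open>\<beta>\<close>, so the limit Schur complement, which is continuous in the covariances
  because the inverse is the adjugate divided by the determinant, has a positive quadratic form at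
  \<open>\<beta>\<close> by positive definiteness of \<open>S\<close>. The dimension cases then reduce to nestedness, since
  \<open>T \<subseteq> J\<close> with \<open>|J| \<le> |T|\<close> forces \<open>J = T\<close>.\<close>

lemma card_less_in_set_lt_card:
  fixes I :: "'a :: order set"
  assumes "finite I" "l \<in> I"
  shows "card {a \<in> I. a < l} < card I"
proof -
  have "l \<notin> {a \<in> I. a < l}" by simp
  then have "{a \<in> I. a < l} \<subset> I" using assms(2) by blast
  then show ?thesis using assms(1) by (rule psubset_card_mono[rotated])
qed

lemma submatrix_carrier:
  assumes "A \<in> carrier_mat k k" "I \<subseteq> {..<k}" "J \<subseteq> {..<k}"
  shows "submatrix A I J \<in> carrier_mat (card I) (card J)"
proof -
  have rows: "{i. i < dim_row A \<and> i \<in> I} = I" and cols: "{j. j < dim_col A \<and> j \<in> J} = J"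
    using assms by auto
  show ?thesis by (rule carrier_matI) (simp_all only: dim_submatrix rows cols)
qed

lemma index_submatrix:
  assumes "A \<in> carrier_mat k k" "I \<subseteq> {..<k}" "J \<subseteq> {..<k}" "i < card I" "j < card J"
  shows "submatrix A I J $$ (i, j) = A $$ (pick I i, pick J j)"
proof -
  have rows: "{i. i < dim_row A \<and> i \<in> I} = I" and cols: "{j. j < dim_col A \<and> j \<in> J} = J"
    using assms(1-3) by auto
  show ?thesis using submatrix_index[of i A I j J] assms(4,5) unfolding rows cols by simp
qed

lemma transpose_submatrix:
  assumes A: "A \<in> carrier_mat k k" and I: "I \<subseteq> {..<k}" and J: "J \<subseteq> {..<k}"
  shows "transpose_mat (submatrix A I J) = submatrix (transpose_mat A) J I"
proof -
  have At: "transpose_mat A \<in> carrier_mat k k" using A by simp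
  have AIJ: "submatrix A I J \<in> carrier_mat (card I) (card J)" by (rule submatrix_carrier[OF A I J])
  have AtJI: "submatrix (transpose_mat A) J I \<in> carrier_mat (card J) (card I)"
    by (rule submatrix_carrier[OF At J I])
  show ?thesis
  proof (rule eq_matI)
    fix i j assume "i < dim_row (submatrix (transpose_mat A) J I)"
      "j < dim_col (submatrix (transpose_mat A) J I)"
    then have i: "i < card J" and j: "j < card I" using AtJI by auto
    have "pick J i < k" "pick I j < k" using pick_in_set_le[OF i] pick_in_set_le[OF j] I J by auto
    then show "transpose_mat (submatrix A I J) $$ (i, j) = submatrix (transpose_mat A) J I $$ (i, j)"
      using A AIJ i j
      by (simp add: index_submatrix[OF A I J j i] index_submatrix[OF At J I i j])
  qed (use AIJ AtJI in auto)
qed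

section \<open>Selection matrices\<close>

definition sel_mat :: "nat \<Rightarrow> nat set \<Rightarrow> 'a :: zero_neq_one mat" where
  "sel_mat k I = mat k (card I) (\<lambda>(l, i). if l = pick I i then 1 else 0)"

lemma dim_sel_mat [simp]: "dim_row (sel_mat k I) = k" "dim_col (sel_mat k I) = card I"
  by (simp_all add: sel_mat_def)

lemma sel_mat_carrier: "sel_mat k I \<in> carrier_mat k (card I)"
  by (rule carrier_matI) simp_all

lemma col_sel_mat: "i < card I \<Longrightarrow> col (sel_mat k I) i = unit_vec k (pick I i)"
  unfolding sel_mat_def unit_vec_def by (intro eq_vecI) auto

lemma submatrix_eq_sel_mat:
  fixes A :: "'a :: comm_ring_1 mat"
  assumes A: "A \<in> carrier_mat k k" and I: "I \<subseteq> {..<k}" and J: "J \<subseteq> {..<k}"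
  shows "submatrix A I J = transpose_mat (sel_mat k I) * A * sel_mat k J"
proof (rule eq_matI)
  let ?E = "transpose_mat (sel_mat k I) * A * sel_mat k J"
  show "dim_row (submatrix A I J) = dim_row ?E" "dim_col (submatrix A I J) = dim_col ?E"
    using submatrix_carrier[OF A I J] by auto
  fix i j assume "i < dim_row ?E" "j < dim_col ?E"
  then have i: "i < card I" and j: "j < card J" by simp_all
  have pI: "pick I i < k" using subsetD[OF I pick_in_set_le[OF i]] by simp
  have pJ: "pick J j < k" using subsetD[OF J pick_in_set_le[OF j]] by simp
  have "?E $$ (i, j) = row (transpose_mat (sel_mat k I) * A) i \<bullet> unit_vec k (pick J j)"
    using i j by (simp add: col_sel_mat[OF j])
  also have "\<dots> = (transpose_mat (sel_mat k I) * A) $$ (i, pick J j)"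
    using A pJ i by simp
  also have "\<dots> = unit_vec k (pick I i) \<bullet> col A (pick J j)"
    using A pJ i by (simp add: col_sel_mat[OF i])
  also have "\<dots> = A $$ (pick I i, pick J j)"
    using A pI pJ by simp
  finally show "submatrix A I J $$ (i, j) = ?E $$ (i, j)"
    using index_submatrix[OF A I J i j] by simp
qed

lemma index_sel_mat_mult_vec:
  fixes v :: "'a :: comm_ring_1 vec"
  assumes I: "I \<subseteq> {..<k}" and v: "v \<in> carrier_vec (card I)" and l: "l < k"
  shows "(sel_mat k I *\<^sub>v v) $ l = (if l \<in> I then v $ card {a \<in> I. a < l} else 0)"
proof -
  have "(sel_mat k I *\<^sub>v v) $ l = (\<Sum>i<card I. (if l = pick I i then 1 else 0) * v $ i)"
    using l v unfolding sel_mat_def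
    by (auto simp: scalar_prod_def row_def lessThan_atLeast0 intro!: sum.cong)
  also have "\<dots> = (if l \<in> I then v $ card {a \<in> I. a < l} else 0)"
  proof (cases "l \<in> I")
    case True
    let ?i = "card {a \<in> I. a < l}"
    have i: "?i < card I" by (rule card_less_in_set_lt_card[OF finite_subset[OF I finite_lessThan] True])
    have "\<And>j. j < card I \<Longrightarrow> l = pick I j \<longleftrightarrow> j = ?i"
      using card_pick_le pick_card_in_set[OF True] by metis
    then have "(\<Sum>j<card I. (if l = pick I j then 1 else 0) * v $ j)
        = (\<Sum>j<card I. if j = ?i then v $ j else 0)"
      by (intro sum.cong) auto
    then show ?thesis using True i by simp
  next
    case False
    then show ?thesis using pick_in_set_le by (auto intro!: sum.neutral)
  qed
  finally show ?thesis .
qed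

lemma sel_mat_subset_factor:
  assumes T: "T \<subseteq> J" and J: "J \<subseteq> {..<k}"
  shows "\<exists>P \<in> carrier_mat (card J) (card T). sel_mat k T = (sel_mat k J * P :: 'a :: comm_ring_1 mat)"
proof
  define P :: "'a mat" where
    "P = mat (card J) (card T) (\<lambda>(j, i). if j = card {a \<in> J. a < pick T i} then 1 else 0)"
  show "P \<in> carrier_mat (card J) (card T)" unfolding P_def by (rule mat_carrier)
  show "sel_mat k T = sel_mat k J * P"
  proof (rule eq_matI)
    show "dim_row (sel_mat k T) = dim_row (sel_mat k J * P)"
      "dim_col (sel_mat k T) = dim_col (sel_mat k J * P)"
      by (auto simp: sel_mat_def P_def)
    fix l i assume "l < dim_row (sel_mat k J * P)" "i < dim_col (sel_mat k J * P)"
    then have l: "l < k" and i: "i < card T" by (auto simp: sel_mat_def P_def)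
    have pT: "pick T i \<in> J" using pick_in_set_le[OF i] T by auto
    let ?j = "card {a \<in> J. a < pick T i}"
    have j: "?j < card J" by (rule card_less_in_set_lt_card[OF finite_subset[OF J finite_lessThan] pT])
    have col_P: "col P i = unit_vec (card J) ?j" using i unfolding P_def unit_vec_def by (intro eq_vecI) auto
    have "(sel_mat k J * P) $$ (l, i) = sel_mat k J $$ (l, ?j)"
      using l i j col_P by (subst index_mult_mat) (auto simp: P_def)
    also have "\<dots> = sel_mat k T $$ (l, i)"
      using pick_card_in_set[OF pT] l j i by (simp add: sel_mat_def)
    finally show "sel_mat k T $$ (l, i) = (sel_mat k J * P) $$ (l, i)" by simp
  qed
qed

lemma scalar_prod_mult_mat_vec_transpose:
  fixes S :: "'a :: comm_ring_1 mat"
  assumes E: "E \<in> carrier_mat k p" and F: "F \<in> carrier_mat k q" and S: "S \<in> carrier_mat k k"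
    and b: "b \<in> carrier_vec p" and c: "c \<in> carrier_vec q"
  shows "(E *\<^sub>v b) \<bullet> (S *\<^sub>v (F *\<^sub>v c)) = b \<bullet> ((transpose_mat E * S * F) *\<^sub>v c)"
proof -
  have tE: "transpose_mat E \<in> carrier_mat p k" using E by auto
  have "(transpose_mat E * S * F) *\<^sub>v c = transpose_mat E *\<^sub>v (S *\<^sub>v (F *\<^sub>v c))"
    using tE S F c by (simp add: assoc_mult_mat[of _ p k _ k _ q]
        assoc_mult_mat_vec[OF tE, of "S * F" q c] assoc_mult_mat_vec[OF S F c])
  moreover have "(transpose_mat (transpose_mat E) *\<^sub>v b) \<bullet> (S *\<^sub>v (F *\<^sub>v c))
      = b \<bullet> (transpose_mat E *\<^sub>v (S *\<^sub>v (F *\<^sub>v c)))"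
    by (rule transpose_vec_mult_scalar[OF tE _ b]) (use S F c in auto)
  ultimately show ?thesis by simp
qed

section \<open>Schur complements\<close>

lemma schur_complement_factor_eq_0:
  fixes X :: "'a :: comm_ring_1 mat"
  assumes X: "X \<in> carrier_mat a b" and Y: "Y \<in> carrier_mat b c" and M: "M \<in> carrier_mat a a"
    and Q: "Q \<in> carrier_mat b b" and inv: "(transpose_mat X * M * X) * Q = 1\<^sub>m b"
  shows "transpose_mat (X * Y) * M * (X * Y)
      - transpose_mat (X * Y) * M * X * Q * (transpose_mat X * M * (X * Y)) = 0\<^sub>m c c"
proof -
  define B where "B = transpose_mat X * M * X"
  have tX: "transpose_mat X \<in> carrier_mat b a" and tY: "transpose_mat Y \<in> carrier_mat c b"
    using X Y by auto
  have B: "B \<in> carrier_mat b b" unfolding B_def using X M by auto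
  have tXY: "transpose_mat (X * Y) = transpose_mat Y * transpose_mat X"
    by (rule transpose_mult[OF X Y])
  have e1: "transpose_mat (X * Y) * M * (X * Y) = transpose_mat Y * B * Y"
    unfolding tXY B_def using X Y M tX tY
    by (simp add: assoc_mult_mat[of _ c b _ a _ a] assoc_mult_mat[of _ c a _ a _ c]
        assoc_mult_mat[of _ c b _ a _ c] assoc_mult_mat[of _ b a _ a _ b]
        assoc_mult_mat[of _ c b _ b _ c] assoc_mult_mat[of _ a a _ b _ c]
        assoc_mult_mat[of _ b a _ b _ c] assoc_mult_mat[of _ b a _ a _ c])
  have e2: "transpose_mat (X * Y) * M * X = transpose_mat Y * B"
    unfolding tXY B_def using X Y M tX tY
    by (simp add: assoc_mult_mat[of _ c b _ a _ a] assoc_mult_mat[of _ c a _ a _ b]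
        assoc_mult_mat[of _ c b _ a _ b] assoc_mult_mat[of _ b a _ a _ b])
  have e3: "transpose_mat X * M * (X * Y) = B * Y"
    unfolding B_def using X Y M tX
    by (simp add: assoc_mult_mat[of _ b a _ a _ b] assoc_mult_mat[of _ b a _ b _ c]
        assoc_mult_mat[of _ b a _ a _ c] assoc_mult_mat[of _ a a _ b _ c])
  have "transpose_mat Y * B * Q * (B * Y) = transpose_mat Y * ((B * Q) * B) * Y"
    using B Q tY Y
    by (simp add: assoc_mult_mat[of _ c b _ b _ b] assoc_mult_mat[of _ c b _ b _ c]
        assoc_mult_mat[of _ b b _ b _ b] assoc_mult_mat[of _ b b _ b _ c])
  also have "(B * Q) * B = B" using inv B unfolding B_def[symmetric] by simp
  finally have e4: "transpose_mat Y * B * Q * (B * Y) = transpose_mat Y * B * Y" .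
  show ?thesis unfolding e1 e2 e3 e4 using tY B Y by (intro minus_r_inv_mat) auto
qed

lemma schur_complement_eq_0_if_subset:
  fixes A :: "'a :: comm_ring_1 mat"
  assumes A: "A \<in> carrier_mat k k" and T: "T \<subseteq> J" and J: "J \<subseteq> {..<k}"
    and Q: "Q \<in> carrier_mat (card J) (card J)" and inv: "submatrix A J J * Q = 1\<^sub>m (card J)"
  shows "submatrix A T T - submatrix A T J * Q * submatrix A J T = 0\<^sub>m (card T) (card T)"
proof -
  have Tk: "T \<subseteq> {..<k}" using T J by auto
  obtain P :: "'a mat" where P: "P \<in> carrier_mat (card J) (card T)"
    and factor: "sel_mat k T = sel_mat k J * P"
    using sel_mat_subset_factor[OF T J] by blast
  show ?thesis
    unfolding submatrix_eq_sel_mat[OF A Tk Tk] submatrix_eq_sel_mat[OF A Tk J]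
      submatrix_eq_sel_mat[OF A J Tk] factor
    by (rule schur_complement_factor_eq_0[OF sel_mat_carrier P A Q])
      (use inv in \<open>simp only: submatrix_eq_sel_mat[OF A J J]\<close>)
qed

lemma quadratic_form_schur_complement:
  fixes S :: "'a :: comm_ring_1 mat"
  assumes S: "S \<in> carrier_mat k k" and T: "T \<subseteq> {..<k}" and J: "J \<subseteq> {..<k}"
    and b: "b \<in> carrier_vec (card T)"
    and Q: "Q \<in> carrier_mat (card J) (card J)" and inv: "submatrix S J J * Q = 1\<^sub>m (card J)"
  defines "w \<equiv> sel_mat k T *\<^sub>v b - sel_mat k J *\<^sub>v (Q *\<^sub>v (submatrix S J T *\<^sub>v b))"
  shows "b \<bullet> ((submatrix S T T - submatrix S T J * Q * submatrix S J T) *\<^sub>v b) = w \<bullet> (S *\<^sub>v w)"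
proof -
  define y where "y = Q *\<^sub>v (submatrix S J T *\<^sub>v b)"
  define u :: "'a vec" where "u = sel_mat k T *\<^sub>v b"
  define v :: "'a vec" where "v = sel_mat k J *\<^sub>v y"
  have STT: "submatrix S T T \<in> carrier_mat (card T) (card T)"
    and STJ: "submatrix S T J \<in> carrier_mat (card T) (card J)"
    and SJT: "submatrix S J T \<in> carrier_mat (card J) (card T)"
    and SJJ: "submatrix S J J \<in> carrier_mat (card J) (card J)"
    by (intro submatrix_carrier[OF S] T J)+
  have y: "y \<in> carrier_vec (card J)" unfolding y_def using Q SJT b by auto
  have u: "u \<in> carrier_vec k" unfolding u_def by (rule mult_mat_vec_carrier[OF sel_mat_carrier b])
  have v: "v \<in> carrier_vec k" unfolding v_def by (rule mult_mat_vec_carrier[OF sel_mat_carrier y])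
  have "submatrix S J J *\<^sub>v y = (submatrix S J J * Q) *\<^sub>v (submatrix S J T *\<^sub>v b)"
    unfolding y_def using SJJ Q SJT b by simp
  then have SJJ_y: "submatrix S J J *\<^sub>v y = submatrix S J T *\<^sub>v b"
    using inv SJT b by simp
  have uu: "u \<bullet> (S *\<^sub>v u) = b \<bullet> (submatrix S T T *\<^sub>v b)"
    unfolding u_def submatrix_eq_sel_mat[OF S T T]
    by (rule scalar_prod_mult_mat_vec_transpose[OF sel_mat_carrier sel_mat_carrier S b b])
  have uv: "u \<bullet> (S *\<^sub>v v) = b \<bullet> (submatrix S T J *\<^sub>v y)"
    unfolding u_def v_def submatrix_eq_sel_mat[OF S T J]
    by (rule scalar_prod_mult_mat_vec_transpose[OF sel_mat_carrier sel_mat_carrier S b y])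
  have vu: "v \<bullet> (S *\<^sub>v u) = y \<bullet> (submatrix S J T *\<^sub>v b)"
    unfolding u_def v_def submatrix_eq_sel_mat[OF S J T]
    by (rule scalar_prod_mult_mat_vec_transpose[OF sel_mat_carrier sel_mat_carrier S y b])
  have vv: "v \<bullet> (S *\<^sub>v v) = y \<bullet> (submatrix S J J *\<^sub>v y)"
    unfolding v_def submatrix_eq_sel_mat[OF S J J]
    by (rule scalar_prod_mult_mat_vec_transpose[OF sel_mat_carrier sel_mat_carrier S y y])
  have w: "w = u - v" unfolding w_def u_def v_def y_def by simp
  have "w \<bullet> (S *\<^sub>v w) = u \<bullet> (S *\<^sub>v u) - u \<bullet> (S *\<^sub>v v) - (v \<bullet> (S *\<^sub>v u) - v \<bullet> (S *\<^sub>v v))"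
    unfolding w using u v S
    by (simp add: mult_minus_distrib_mat_vec[OF S u v] minus_scalar_prod_distrib[of _ k]
        scalar_prod_minus_distrib[of _ k])
  \<comment> \<open>\<open>S\<^sub>J\<^sub>J y = S\<^sub>J\<^sub>T b\<close> makes the cross term \<open>v' S u\<close> cancel \<open>v' S v\<close>\<close>
  also have "\<dots> = b \<bullet> (submatrix S T T *\<^sub>v b) - b \<bullet> (submatrix S T J *\<^sub>v y)"
    unfolding uu uv vu vv SJJ_y by simp
  also have "\<dots> = b \<bullet> ((submatrix S T T - submatrix S T J * Q * submatrix S J T) *\<^sub>v b)"
    using STT STJ SJT Q b unfolding y_def
    by (simp add: minus_mult_distrib_mat_vec[of _ "card T" "card T"]
        scalar_prod_minus_distrib[of _ "card T"]
        assoc_mult_mat[of _ "card T" "card J" _ "card J" _ "card T"]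
        assoc_mult_mat_vec[OF STJ, of "Q * submatrix S J T" "card T" b]
        assoc_mult_mat_vec[OF Q SJT b])
  finally show ?thesis by (rule sym)
qed

section \<open>Positive definite matrices\<close>

lemma pos_def_mat_det_ne_0:
  assumes "pos_def_mat A n"
  shows "det A \<noteq> 0"
proof
  assume "det A = 0"
  then obtain v where "v \<in> carrier_vec n" "v \<noteq> 0\<^sub>v n" "A *\<^sub>v v = 0\<^sub>v n"
    using assms det_0_iff_vec_prod_zero unfolding pos_def_mat_def by blast
  then show False using assms unfolding pos_def_mat_def by auto
qed

lemma det_ne_0_the_mat_inverse:
  fixes A :: "'a :: field mat"
  assumes A: "A \<in> carrier_mat n n" and det: "det A \<noteq> 0"
  shows "the (mat_inverse A) \<in> carrier_mat n n" and "A * the (mat_inverse A) = 1\<^sub>m n"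
proof -
  have "A \<in> Units (ring_mat TYPE('a) n ())" by (rule det_non_zero_imp_unit[OF A det])
  then obtain Q where "mat_inverse A = Some Q" using mat_inverse(1)[OF A, of "()"] by auto
  then show "the (mat_inverse A) \<in> carrier_mat n n" "A * the (mat_inverse A) = 1\<^sub>m n"
    using mat_inverse(2)[OF A] by auto
qed

lemma pos_def_mat_submatrix:
  assumes S: "pos_def_mat S k" and J: "J \<subseteq> {..<k}"
  shows "pos_def_mat (submatrix S J J) (card J)"
  unfolding pos_def_mat_def
proof (intro conjI ballI impI)
  have Sk: "S \<in> carrier_mat k k" and sym: "transpose_mat S = S" using S by (auto simp: pos_def_mat_def)
  show "submatrix S J J \<in> carrier_mat (card J) (card J)" using submatrix_carrier[OF Sk J J] .
  show "transpose_mat (submatrix S J J) = submatrix S J J"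
    using transpose_submatrix[OF Sk J J] sym by simp
  fix v :: "real vec" assume v: "v \<in> carrier_vec (card J)" and "v \<noteq> 0\<^sub>v (card J)"
  then obtain i where i: "i < card J" "v $ i \<noteq> 0" by (metis carrier_vecD eq_vecI index_zero_vec(1,2))
  have pk: "pick J i < k" using pick_in_set_le[OF i(1)] J by auto
  have "(sel_mat k J *\<^sub>v v) $ pick J i = v $ i"
    using index_sel_mat_mult_vec[OF J v pk] pick_in_set_le[OF i(1)] card_pick_le[OF i(1)]
    by (simp del: index_mult_mat_vec)
  then have "sel_mat k J *\<^sub>v v \<noteq> 0\<^sub>v k" using i pk by (auto simp del: index_mult_mat_vec)
  then have "(sel_mat k J *\<^sub>v v) \<bullet> (S *\<^sub>v (sel_mat k J *\<^sub>v v)) > 0"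
    using S mult_mat_vec_carrier[OF sel_mat_carrier v] unfolding pos_def_mat_def by blast
  then show "v \<bullet> (submatrix S J J *\<^sub>v v) > 0"
    using scalar_prod_mult_mat_vec_transpose[OF sel_mat_carrier sel_mat_carrier Sk v v]
      submatrix_eq_sel_mat[OF Sk J J] by simp
qed

lemma schur_cov_eq_0_if_subset:
  assumes A: "A \<in> carrier_mat k k" and T: "T \<subseteq> J" and J: "J \<subseteq> {..<k}"
    and det: "det (submatrix A J J) \<noteq> 0"
  shows "schur_cov A T J = 0\<^sub>m (card T) (card T)"
  unfolding schur_cov_def
  using schur_complement_eq_0_if_subset[OF A T J] det_ne_0_the_mat_inverse[OF submatrix_carrier[OF A J J] det]
  by blast

lemma schur_cov_carrier:
  assumes A: "A \<in> carrier_mat k k" and T: "T \<subseteq> {..<k}" and J: "J \<subseteq> {..<k}"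
    and det: "det (submatrix A J J) \<noteq> 0"
  shows "schur_cov A T J \<in> carrier_mat (card T) (card T)"
  unfolding schur_cov_def
  by (rule minus_carrier_mat, rule mult_carrier_mat[OF mult_carrier_mat[OF submatrix_carrier[OF A T J]
      det_ne_0_the_mat_inverse(1)[OF submatrix_carrier[OF A J J] det]] submatrix_carrier[OF A J T]])

lemma schur_cov_quadratic_form_pos:
  assumes S: "pos_def_mat S k" and T: "T \<subseteq> {..<k}" and J: "J \<subseteq> {..<k}" and not_sub: "\<not> T \<subseteq> J"
    and b: "b \<in> carrier_vec (card T)" and b_nz: "\<forall>i < card T. b $ i \<noteq> 0"
  shows "b \<bullet> (schur_cov S T J *\<^sub>v b) > 0"
proof -
  have Sk: "S \<in> carrier_mat k k" using S by (simp add: pos_def_mat_def)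
  have SJJ: "submatrix S J J \<in> carrier_mat (card J) (card J)" using submatrix_carrier[OF Sk J J] .
  define Q where "Q = the (mat_inverse (submatrix S J J))"
  have det: "det (submatrix S J J) \<noteq> 0" by (rule pos_def_mat_det_ne_0[OF pos_def_mat_submatrix[OF S J]])
  have Q: "Q \<in> carrier_mat (card J) (card J)" "submatrix S J J * Q = 1\<^sub>m (card J)"
    unfolding Q_def using det_ne_0_the_mat_inverse[OF SJJ det] by auto
  define y where "y = Q *\<^sub>v (submatrix S J T *\<^sub>v b)"
  define w where "w = sel_mat k T *\<^sub>v b - sel_mat k J *\<^sub>v y"
  have y: "y \<in> carrier_vec (card J)"
    unfolding y_def using Q submatrix_carrier[OF Sk J T] b by auto
  obtain x where x: "x \<in> T" "x \<notin> J" using not_sub by auto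
  have xk: "x < k" using x T by auto
  have "w $ x = b $ card {a \<in> T. a < x}"
    unfolding w_def using xk x index_sel_mat_mult_vec[OF T b xk] index_sel_mat_mult_vec[OF J y xk]
    by (simp del: index_mult_mat_vec)
  moreover have "card {a \<in> T. a < x} < card T"
    by (rule card_less_in_set_lt_card[OF finite_subset[OF T finite_lessThan] x(1)])
  ultimately have "w \<noteq> 0\<^sub>v k" using b_nz xk by auto
  moreover have "w \<in> carrier_vec k"
    unfolding w_def by (intro minus_carrier_vec mult_mat_vec_carrier[OF sel_mat_carrier] b y)
  ultimately have "w \<bullet> (S *\<^sub>v w) > 0" using S unfolding pos_def_mat_def by auto
  then show ?thesis
    unfolding schur_cov_def Q_def[symmetric]
    using quadratic_form_schur_complement[OF Sk T J b Q] unfolding w_def y_def by simp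
qed

section \<open>Entrywise convergence of matrices\<close>

definition mat_tendsto :: "('b \<Rightarrow> real mat) \<Rightarrow> real mat \<Rightarrow> 'b filter \<Rightarrow> bool" where
  "mat_tendsto A B F \<longleftrightarrow> (\<forall>x. dim_row (A x) = dim_row B \<and> dim_col (A x) = dim_col B) \<and>
     (\<forall>i < dim_row B. \<forall>j < dim_col B. ((\<lambda>x. A x $$ (i, j)) \<longlongrightarrow> B $$ (i, j)) F)"

lemma mat_tendsto_carrier:
  assumes "mat_tendsto A B F" "B \<in> carrier_mat m n"
  shows "A x \<in> carrier_mat m n"
  using assms unfolding mat_tendsto_def carrier_mat_def by auto

lemma mat_tendsto_mult:
  assumes A: "mat_tendsto A B F" and C: "mat_tendsto C D F" and dim: "dim_col B = dim_row D"
  shows "mat_tendsto (\<lambda>x. A x * C x) (B * D) F"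
  unfolding mat_tendsto_def
proof (intro conjI allI impI)
  show "dim_row (A x * C x) = dim_row (B * D)" "dim_col (A x * C x) = dim_col (B * D)" for x
    using A C unfolding mat_tendsto_def by auto
  fix i j assume i: "i < dim_row (B * D)" and j: "j < dim_col (B * D)"
  have "\<And>x. (A x * C x) $$ (i, j) = (\<Sum>l < dim_col B. A x $$ (i, l) * C x $$ (l, j))"
    using A C dim i j unfolding mat_tendsto_def
    by (auto simp: scalar_prod_def lessThan_atLeast0 intro!: sum.cong)
  moreover have "(B * D) $$ (i, j) = (\<Sum>l < dim_col B. B $$ (i, l) * D $$ (l, j))"
    using dim i j by (auto simp: scalar_prod_def lessThan_atLeast0 intro!: sum.cong)
  ultimately show "((\<lambda>x. (A x * C x) $$ (i, j)) \<longlongrightarrow> (B * D) $$ (i, j)) F"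
    using A C dim i j unfolding mat_tendsto_def by (auto intro!: tendsto_sum tendsto_mult)
qed

lemma mat_tendsto_minus:
  assumes "mat_tendsto A B F" "mat_tendsto C D F" "dim_row B = dim_row D" "dim_col B = dim_col D"
  shows "mat_tendsto (\<lambda>x. A x - C x) (B - D) F"
  using assms unfolding mat_tendsto_def by (auto intro!: tendsto_diff)

lemma mat_tendsto_smult:
  assumes "mat_tendsto A B F" "(f \<longlongrightarrow> c) F"
  shows "mat_tendsto (\<lambda>x. f x \<cdot>\<^sub>m A x) (c \<cdot>\<^sub>m B) F"
  using assms unfolding mat_tendsto_def by (auto intro!: tendsto_mult)

lemma mat_tendsto_mat_delete:
  "mat_tendsto A B F \<Longrightarrow> mat_tendsto (\<lambda>x. mat_delete (A x) i j) (mat_delete B i j) F"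
  unfolding mat_tendsto_def mat_delete_def by auto

lemma mat_tendsto_submatrix:
  assumes A: "mat_tendsto A B F" and B: "B \<in> carrier_mat k k"
    and I: "I \<subseteq> {..<k}" and J: "J \<subseteq> {..<k}"
  shows "mat_tendsto (\<lambda>x. submatrix (A x) I J) (submatrix B I J) F"
proof -
  have Ak: "\<And>x. A x \<in> carrier_mat k k" using mat_tendsto_carrier[OF A B] .
  have "((\<lambda>x. A x $$ (pick I i, pick J j)) \<longlongrightarrow> B $$ (pick I i, pick J j)) F"
    if "i < card I" "j < card J" for i j
  proof -
    have "pick I i < k" "pick J j < k"
      using subsetD[OF I pick_in_set_le[OF that(1)]] subsetD[OF J pick_in_set_le[OF that(2)]] by auto
    then show ?thesis using A B unfolding mat_tendsto_def by auto
  qed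
  then show ?thesis
    using submatrix_carrier[OF B I J] submatrix_carrier[OF Ak I J]
    unfolding mat_tendsto_def by (auto simp: index_submatrix[OF Ak I J] index_submatrix[OF B I J])
qed

lemma mat_tendsto_det:
  assumes A: "mat_tendsto A B F" and B: "B \<in> carrier_mat n n"
  shows "((\<lambda>x. det (A x)) \<longlongrightarrow> det B) F"
proof -
  have An: "\<And>x. A x \<in> carrier_mat n n" using mat_tendsto_carrier[OF A B] .
  have "\<And>i j. i < n \<Longrightarrow> j < n \<Longrightarrow> ((\<lambda>x. A x $$ (i, j)) \<longlongrightarrow> B $$ (i, j)) F"
    using A B unfolding mat_tendsto_def by auto
  then show ?thesis
    unfolding det_def'[OF An] det_def'[OF B]
    by (intro tendsto_sum tendsto_mult tendsto_const tendsto_prod) (auto dest: permutes_in_image)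
qed

lemma mat_tendsto_adj_mat:
  assumes A: "mat_tendsto A B F" and B: "B \<in> carrier_mat n n"
  shows "mat_tendsto (\<lambda>x. adj_mat (A x)) (adj_mat B) F"
  unfolding mat_tendsto_def
proof (intro conjI allI impI)
  have An: "\<And>x. A x \<in> carrier_mat n n" using mat_tendsto_carrier[OF A B] .
  show "dim_row (adj_mat (A x)) = dim_row (adj_mat B)" "dim_col (adj_mat (A x)) = dim_col (adj_mat B)" for x
    using An B by (auto simp: adj_mat_def)
  fix i j assume "i < dim_row (adj_mat B)" "j < dim_col (adj_mat B)"
  then have i: "i < n" and j: "j < n" using B by (auto simp: adj_mat_def)
  have "((\<lambda>x. det (mat_delete (A x) j i)) \<longlongrightarrow> det (mat_delete B j i)) F"
    by (rule mat_tendsto_det[OF mat_tendsto_mat_delete[OF A] mat_delete_carrier[OF B]])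
  then show "((\<lambda>x. adj_mat (A x) $$ (i, j)) \<longlongrightarrow> adj_mat B $$ (i, j)) F"
    using B i j by (auto simp: adj_mat_def cofactor_def carrier_matD[OF An] intro: tendsto_mult_left)
qed

lemma the_mat_inverse_eq_adj_mat:
  fixes A :: "'a :: field mat"
  assumes A: "A \<in> carrier_mat n n" and det: "det A \<noteq> 0"
  shows "the (mat_inverse A) = (1 / det A) \<cdot>\<^sub>m adj_mat A"
proof -
  let ?Q = "the (mat_inverse A)"
  have Q: "?Q \<in> carrier_mat n n" "A * ?Q = 1\<^sub>m n" using det_ne_0_the_mat_inverse[OF A det] by auto
  have adj: "adj_mat A \<in> carrier_mat n n" "adj_mat A * A = det A \<cdot>\<^sub>m 1\<^sub>m n" using adj_mat[OF A] by auto
  have "adj_mat A = adj_mat A * (A * ?Q)" using Q adj by simp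
  also have "\<dots> = (adj_mat A * A) * ?Q" by (rule assoc_mult_mat[OF adj(1) A Q(1), symmetric])
  also have "\<dots> = det A \<cdot>\<^sub>m ?Q"
    using adj Q mult_smult_assoc_mat[OF one_carrier_mat[of n] Q(1), of "det A"] by simp
  finally show ?thesis using det Q by (intro eq_matI) auto
qed

lemma mat_tendsto_the_mat_inverse:
  assumes A: "mat_tendsto A B F" and B: "B \<in> carrier_mat n n"
    and det_A: "\<forall>x. det (A x) \<noteq> 0" and det_B: "det B \<noteq> 0"
  shows "mat_tendsto (\<lambda>x. the (mat_inverse (A x))) (the (mat_inverse B)) F"
proof -
  have An: "\<And>x. A x \<in> carrier_mat n n" using mat_tendsto_carrier[OF A B] .
  show ?thesis
    unfolding the_mat_inverse_eq_adj_mat[OF An det_A[rule_format]] the_mat_inverse_eq_adj_mat[OF B det_B]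
    by (intro mat_tendsto_smult mat_tendsto_adj_mat[OF A B] tendsto_divide tendsto_const
        mat_tendsto_det[OF A B] det_B)
qed

lemma mat_tendsto_quadratic_form:
  assumes A: "mat_tendsto A B F" and B: "B \<in> carrier_mat n n" and b: "b \<in> carrier_vec n"
  shows "((\<lambda>x. b \<bullet> (A x *\<^sub>v b)) \<longlongrightarrow> b \<bullet> (B *\<^sub>v b)) F"
proof -
  have quad: "b \<bullet> (M *\<^sub>v b) = (\<Sum>i<n. b $ i * (\<Sum>j<n. M $$ (i, j) * b $ j))"
    if "M \<in> carrier_mat n n" for M
    using b that by (auto simp: scalar_prod_def lessThan_atLeast0 row_def intro!: sum.cong)
  have An: "\<And>x. A x \<in> carrier_mat n n" using mat_tendsto_carrier[OF A B] .
  show ?thesis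
    unfolding quad[OF An] quad[OF B]
    using A B unfolding mat_tendsto_def by (auto intro!: tendsto_sum tendsto_mult)
qed

lemma mat_tendsto_schur_cov:
  assumes lim: "mat_tendsto A S F" and S: "S \<in> carrier_mat k k"
    and T: "T \<subseteq> {..<k}" and J: "J \<subseteq> {..<k}"
    and det_A: "\<forall>x. det (submatrix (A x) J J) \<noteq> 0" and det_S: "det (submatrix S J J) \<noteq> 0"
  shows "mat_tendsto (\<lambda>x. schur_cov (A x) T J) (schur_cov S T J) F"
proof -
  have lim_sub: "mat_tendsto (\<lambda>x. submatrix (A x) I I') (submatrix S I I') F"
    if "I \<subseteq> {..<k}" "I' \<subseteq> {..<k}" for I I'
    using mat_tendsto_submatrix[OF lim S that] .
  have SJJ: "submatrix S J J \<in> carrier_mat (card J) (card J)" using submatrix_carrier[OF S J J] .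
  show ?thesis
    unfolding schur_cov_def
    using submatrix_carrier[OF S T T] submatrix_carrier[OF S T J] submatrix_carrier[OF S J T]
      det_ne_0_the_mat_inverse(1)[OF SJJ det_S]
    by (intro mat_tendsto_minus mat_tendsto_mult lim_sub T J
        mat_tendsto_the_mat_inverse[OF lim_sub[OF J J] SJJ det_A det_S]) auto
qed

lemma pseudo_dist_eq_0_if_subset:
  assumes "A \<in> carrier_mat k k" "T \<subseteq> J" "J \<subseteq> {..<k}" "det (submatrix A J J) \<noteq> 0"
    and beta: "beta \<in> carrier_vec (card T)"
  shows "pseudo_dist sigma2 beta A T J = 0"
proof -
  have "0\<^sub>m (card T) (card T) *\<^sub>v beta = 0\<^sub>v (card T)"
    using beta by (intro eq_vecI) (auto simp: scalar_prod_def)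
  then show ?thesis
    unfolding pseudo_dist_def schur_cov_eq_0_if_subset[OF assms(1-4)] using beta by simp
qed

lemma pseudo_dist_tendsto_pos:
  assumes lim: "mat_tendsto A S F" and S: "pos_def_mat S k"
    and T: "T \<subseteq> {..<k}" and J: "J \<subseteq> {..<k}" and not_sub: "\<not> T \<subseteq> J"
    and det_A: "\<forall>x. det (submatrix (A x) J J) \<noteq> 0"
    and beta: "beta \<in> carrier_vec (card T)" and beta_nz: "\<forall>i < card T. beta $ i \<noteq> 0"
    and sigma_pos: "sigma2 > 0"
  shows "\<exists>d > 0. ((\<lambda>x. pseudo_dist sigma2 beta (A x) T J) \<longlongrightarrow> d) F"
proof (intro exI conjI)
  have Sk: "S \<in> carrier_mat k k" using S by (simp add: pos_def_mat_def)
  have det_S: "det (submatrix S J J) \<noteq> 0"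
    by (rule pos_def_mat_det_ne_0[OF pos_def_mat_submatrix[OF S J]])
  show "((\<lambda>x. pseudo_dist sigma2 beta (A x) T J) \<longlongrightarrow> pseudo_dist sigma2 beta S T J) F"
    unfolding pseudo_dist_def
    by (intro tendsto_mult tendsto_const mat_tendsto_quadratic_form[OF
        mat_tendsto_schur_cov[OF lim Sk T J det_A det_S] schur_cov_carrier[OF Sk T J det_S] beta])
  show "pseudo_dist sigma2 beta S T J > 0"
    unfolding pseudo_dist_def
    using schur_cov_quadratic_form_pos[OF S T J not_sub beta beta_nz] sigma_pos by simp
qed

theorem lemma3:
  fixes k :: nat and T J :: "nat set" and beta :: "real vec" and sigma2 :: real
    and Sn :: "nat \<Rightarrow> real mat" and S :: "real mat"
  assumes T_sub: "T \<subseteq> {..<k}" and J_sub: "J \<subseteq> {..<k}"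
    and beta_dim: "beta \<in> carrier_vec (card T)"
    and beta_nz: "\<forall>i < card T. beta $ i \<noteq> 0"
    and sigma_pos: "sigma2 > 0"
    and Sn_dim: "\<forall>n. Sn n \<in> carrier_mat k k"
    and Stt_pd: "\<forall>n. pos_def_mat (submatrix (Sn n) T T) (card T)"
    and Sjj_pd: "\<forall>n. pos_def_mat (submatrix (Sn n) J J) (card J)"
    and S_lim: "\<forall>i < k. \<forall>j < k. (\<lambda>n. Sn n $$ (i, j)) \<longlonglongrightarrow> S $$ (i, j)"
    and S_pd: "pos_def_mat S k"
  shows "(card J < card T \<longrightarrow>
            (\<exists>d > 0. (\<lambda>n. pseudo_dist sigma2 beta (Sn n) T J) \<longlonglongrightarrow> d))
       \<and> (card J = card T \<longrightarrow>
            (J = T \<longrightarrow> (\<lambda>n. pseudo_dist sigma2 beta (Sn n) T J) \<longlonglongrightarrow> 0)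
          \<and> (J \<noteq> T \<longrightarrow> (\<exists>d > 0. (\<lambda>n. pseudo_dist sigma2 beta (Sn n) T J) \<longlonglongrightarrow> d)))
       \<and> (card J > card T \<longrightarrow>
            (T \<subseteq> J \<longrightarrow> (\<lambda>n. pseudo_dist sigma2 beta (Sn n) T J) \<longlonglongrightarrow> 0)
          \<and> (\<not> T \<subseteq> J \<longrightarrow> (\<exists>d > 0. (\<lambda>n. pseudo_dist sigma2 beta (Sn n) T J) \<longlonglongrightarrow> d)))"
proof -
  \<comment> \<open>Only the blocks \<open>S\<^sub>J\<^sub>J\<close> are inverted.\<close>
  have S: "S \<in> carrier_mat k k" using S_pd by (simp add: pos_def_mat_def)
  have lim: "mat_tendsto Sn S sequentially"
    using S_lim by (simp add: mat_tendsto_def carrier_matD[OF S] carrier_matD[OF Sn_dim[rule_format]])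
  have det_Sn: "\<forall>n. det (submatrix (Sn n) J J) \<noteq> 0"
    using Sjj_pd pos_def_mat_det_ne_0 by blast
  have nested: "(\<lambda>n. pseudo_dist sigma2 beta (Sn n) T J) \<longlonglongrightarrow> 0" if "T \<subseteq> J"
    using pseudo_dist_eq_0_if_subset[OF Sn_dim[rule_format] that J_sub det_Sn[rule_format] beta_dim]
    by simp
  have non_nested: "\<exists>d > 0. (\<lambda>n. pseudo_dist sigma2 beta (Sn n) T J) \<longlonglongrightarrow> d" if "\<not> T \<subseteq> J"
    by (rule pseudo_dist_tendsto_pos[OF lim S_pd T_sub J_sub that det_Sn beta_dim beta_nz sigma_pos])
  have "finite J" by (rule finite_subset[OF J_sub finite_lessThan])
  then have "card J < card T \<Longrightarrow> \<not> T \<subseteq> J" and "card J = card T \<Longrightarrow> J \<noteq> T \<Longrightarrow> \<not> T \<subseteq> J"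
    using card_mono card_subset_eq by (meson not_le, metis)
  then show ?thesis using nested non_nested by auto
qed

end
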